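(* Let $\mathcal{X}=\{x_1,\dots,x_n\}$, $\mathcal{X}_{\mathrm{in}}\subseteq\mathcal{X}$ with $n_{\mathrm{in}}$ points, and let $\mathcal{X}_{\mathrm{out}}\subseteq\mathcal{X}_{\mathrm{in}}$ be a random subset of size $n_{\mathrm{out}}$. Let $\mathbf{k}$ be a reproducing kernel generating $K$, i.e. $K=(\mathbf{k}(x_i,x_j))_{i,j=1}^n$. If $p_{\mathrm{in}}-q_{\mathrm{out}}$ is $(K,\nu)$-sub-Gaussian on an event $\mathcal{E}$, then $(\mathbb{P}_{\mathrm{in}}-\mathbb{P}_{\mathrm{out}})\mathbf{k}$ is $(\mathbf{k},\nu)$-sub-Gaussian on $\mathcal{E}$.
   Context: $p_{\mathrm{in},i}=\mathbf{1}\{x_i\in\mathcal{X}_{\mathrm{in}}\}/n_{\mathrm{in}}$, $q_{\mathrm{out},i}=\mathbf{1}\{x_i\in\mathcal{X}_{\mathrm{out}}\}/n_{\mathrm{out}}$. $(\mathbb{P}_{\mathrm{in}}-\mathbb{P}_{\mathrm{out}})\mathbf{k}:=\frac{1}{n_{\mathrm{in}}}\sum_{x\in\mathcal{X}_{\mathrm{in}}}\mathbf{k}(x,\cdot)-\frac1{n_{\mathrm{out}}}\sum_{x\in\mathcal{X}_{\mathrm{out}}}\mathbf{k}(x,\cdot)\in\mathcal{H}_{\mathbf{k}}$ (the RKHS of $\mathbf{k}$). A random $\phi\in\mathcal{H}_{\mathbf{k}}$ is $(\mathbf{k},\nu)$-sub-Gaussian on $\mathcal{E}$ if $\nu>0$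 and $\mathbb{E}[\exp(\langle f,\phi\rangle_{\mathbf{k}})\mathbf{1}_{\mathcal{E}}]\le\exp(\frac{\nu^2}{2}\|f\|_{\mathbf{k}}^2)$ for all $f\in\mathcal{H}_{\mathbf{k}}$. A random $w\in\mathbb{R}^n$ is $(K,\nu)$-sub-Gaussian on $\mathcal{E}$ if $K$ is SPSD, $\nu>0$, and $\mathbb{E}[\exp(u^\top Kw)\mathbf{1}_{\mathcal{E}}]\le\exp(\frac{\nu^2}{2}u^\top Ku)$ for all $u\in\mathbb{R}^n$. *)

theory Defs
  imports "HOL-Probability.Probability"
begin

text \<open>The RKHS of a kernel k on a point type 'x is represented (up to isometric
isomorphism) by a real Hilbert space 'h together with the canonical feature map
kf x = k(x,.) : then k x y = <k(x,.),k(y,.)> and the span of the k(x,.) is dense.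
An element f of 'h is identified with the function (\<lambda>x. f \<bullet> kf x).\<close>
definition rkhs_of :: "('x \<Rightarrow> 'x \<Rightarrow> real) \<Rightarrow> ('x \<Rightarrow> 'h::{real_inner,complete_space}) \<Rightarrow> bool" where
  "rkhs_of k kf \<longleftrightarrow> (\<forall>x y. k x y = kf x \<bullet> kf y) \<and> closure (span (range kf)) = UNIV"

definition spsd :: "real^'n^'n \<Rightarrow> bool" where
  "spsd K \<longleftrightarrow> transpose K = K \<and> (\<forall>u. 0 \<le> u \<bullet> (K *v u))"

definition vec_subgaussian_on ::
  "'a measure \<Rightarrow> 'a set \<Rightarrow> real^'n^'n \<Rightarrow> real \<Rightarrow> ('a \<Rightarrow> real^'n) \<Rightarrow> bool" where
  "vec_subgaussian_on M E K \<nu> w \<longleftrightarrow> spsd K \<and> \<nu> > 0 \<and>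
     (\<forall>u. (\<integral>\<^sup>+ \<omega>. ennreal (exp (u \<bullet> (K *v w \<omega>)) * indicator E \<omega>) \<partial>M)
            \<le> ennreal (exp (\<nu>\<^sup>2 / 2 * (u \<bullet> (K *v u)))))"

definition rkhs_subgaussian_on ::
  "'a measure \<Rightarrow> 'a set \<Rightarrow> real \<Rightarrow> ('a \<Rightarrow> 'h::real_inner) \<Rightarrow> bool" where
  "rkhs_subgaussian_on M E \<nu> \<phi> \<longleftrightarrow> \<nu> > 0 \<and>
     (\<forall>f. (\<integral>\<^sup>+ \<omega>. ennreal (exp (f \<bullet> \<phi> \<omega>) * indicator E \<omega>) \<partial>M)
            \<le> ennreal (exp (\<nu>\<^sup>2 / 2 * (norm f)\<^sup>2)))"

end

theory Submission
  imports Defs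
begin

(* With w = p_in - q_out the embedding is phi = (\<Sum>j. w_j k(x_j,.)). For f in the RKHS let
   g = (\<Sum>i. u_i k(x_i,.)) be its orthogonal projection onto the span of the k(x_j,.). Then
   <f, phi> = <g, phi> = u' K w and ||f||^2 >= ||g||^2 = u' K u, so the (K,nu)-bound for w
   at u is the (k,nu)-bound for phi at f. *)

lemma span_image_eq_range_sum:
  fixes v :: "'i \<Rightarrow> 'a::real_vector"
  assumes "finite I"
  shows "span (v ` I) = range (\<lambda>u. \<Sum>i\<in>I. u i *\<^sub>R v i)"
proof
  show "range (\<lambda>u. \<Sum>i\<in>I. u i *\<^sub>R v i) \<subseteq> span (v ` I)"
    by (auto intro!: span_sum span_scale intro: span_base)
  have "subspace (range (\<lambda>u. \<Sum>i\<in>I. u i *\<^sub>R v i))"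
    unfolding subspace_def
  proof (intro conjI ballI allI)
    show "0 \<in> range (\<lambda>u. \<Sum>i\<in>I. u i *\<^sub>R v i)"
      by (rule image_eqI[of _ _ "\<lambda>_. 0"]) simp_all
    fix a b and c :: real
    assume "a \<in> range (\<lambda>u. \<Sum>i\<in>I. u i *\<^sub>R v i)" "b \<in> range (\<lambda>u. \<Sum>i\<in>I. u i *\<^sub>R v i)"
    then obtain ua ub where "a = (\<Sum>i\<in>I. ua i *\<^sub>R v i)" "b = (\<Sum>i\<in>I. ub i *\<^sub>R v i)"
      by blast
    then show "a + b \<in> range (\<lambda>u. \<Sum>i\<in>I. u i *\<^sub>R v i)"
      by (intro image_eqI[of _ _ "\<lambda>i. ua i + ub i"]) (simp_all add: sum.distrib scaleR_add_left)
    show "c *\<^sub>R a \<in> range (\<lambda>u. \<Sum>i\<in>I. u i *\<^sub>R v i)"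
      using \<open>a = _\<close> by (intro image_eqI[of _ _ "\<lambda>i. c * ua i"]) (simp_all add: scaleR_sum_right)
  qed
  moreover have "v ` I \<subseteq> range (\<lambda>u. \<Sum>i\<in>I. u i *\<^sub>R v i)"
  proof
    fix y assume "y \<in> v ` I"
    then obtain j where "j \<in> I" "y = v j" by blast
    then show "y \<in> range (\<lambda>u. \<Sum>i\<in>I. u i *\<^sub>R v i)"
      using assms by (intro image_eqI[of _ _ "\<lambda>i. if i = j then 1 else 0"])
        (simp_all add: if_distrib[of "\<lambda>r. r *\<^sub>R a" for a] cong: if_cong)
  qed
  ultimately show "span (v ` I) \<subseteq> range (\<lambda>u. \<Sum>i\<in>I. u i *\<^sub>R v i)"
    by (rule span_minimal[rotated])
qed

lemma orthogonal_projection_onto_span_exists: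
  fixes B :: "'a::real_inner set"
  assumes "finite B"
  obtains p where "p \<in> span B" "\<And>b. b \<in> span B \<Longrightarrow> orthogonal (f - p) b"
proof -
  obtain C where C: "finite C" "span C = span B" "pairwise orthogonal C"
    using basis_orthogonal[OF assms] by blast
  define p where "p = (\<Sum>c\<in>C. (c \<bullet> f / (c \<bullet> c)) *\<^sub>R c)"
  have "orthogonal (f - p) c" if "c \<in> C" for c
  proof -
    have "p \<bullet> c = (\<Sum>c'\<in>C. if c' = c then c \<bullet> f / (c \<bullet> c) * (c \<bullet> c) else 0)"
      unfolding p_def inner_sum_left
      by (intro sum.cong refl) (use C(3) that in \<open>auto simp: pairwise_def orthogonal_def\<close>)
    also have "\<dots> = f \<bullet> c"
      using C(1) that by (simp add: inner_commute)
    finally show ?thesis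
      by (simp add: orthogonal_def inner_diff_left)
  qed
  then have "orthogonal (f - p) b" if "b \<in> span B" for b
    using orthogonal_to_span that C(2) by blast
  moreover have "p \<in> span B"
    unfolding p_def C(2)[symmetric] by (intro span_sum span_scale span_base)
  ultimately show thesis
    using that by blast
qed

lemma inner_sum_scaleR_eq_gram:
  fixes v :: "'n::finite \<Rightarrow> 'a::real_inner"
  assumes "\<And>i j. G $ i $ j = v i \<bullet> v j"
  shows "(\<Sum>i\<in>UNIV. u $ i *\<^sub>R v i) \<bullet> (\<Sum>j\<in>UNIV. w $ j *\<^sub>R v j) = u \<bullet> (G *v w)"
  by (simp add: inner_sum_left inner_sum_right inner_vec_def matrix_vector_mult_def assms
      sum_distrib_left mult_ac) (rule sum.swap)

lemma gram_representer_exists: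
  fixes f :: "'a::real_inner" and v :: "'n::finite \<Rightarrow> 'a"
  assumes gram: "\<And>i j. G $ i $ j = v i \<bullet> v j"
  obtains u where "\<And>w. f \<bullet> (\<Sum>j\<in>UNIV. w $ j *\<^sub>R v j) = u \<bullet> (G *v w)"
    and "u \<bullet> (G *v u) \<le> (norm f)\<^sup>2"
proof -
  obtain p where p: "p \<in> span (range v)" "\<And>b. b \<in> span (range v) \<Longrightarrow> orthogonal (f - p) b"
    using orthogonal_projection_onto_span_exists[OF finite_imageI[OF finite_class.finite_UNIV]]
    by blast
  then obtain c where "p = (\<Sum>i\<in>UNIV. c i *\<^sub>R v i)"
    using span_image_eq_range_sum[of UNIV v] by auto
  then have p_eq: "p = (\<Sum>i\<in>UNIV. (\<chi> i. c i) $ i *\<^sub>R v i)"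
    by simp
  have "f \<bullet> (\<Sum>j\<in>UNIV. w $ j *\<^sub>R v j) = (\<chi> i. c i) \<bullet> (G *v w)" for w
  proof -
    have "orthogonal (f - p) (\<Sum>j\<in>UNIV. w $ j *\<^sub>R v j)"
      by (intro p(2) span_sum span_scale span_base) simp
    then have "f \<bullet> (\<Sum>j\<in>UNIV. w $ j *\<^sub>R v j) = p \<bullet> (\<Sum>j\<in>UNIV. w $ j *\<^sub>R v j)"
      by (simp add: orthogonal_def inner_diff_left)
    then show ?thesis
      unfolding p_eq inner_sum_scaleR_eq_gram[OF gram] .
  qed
  moreover have "(\<chi> i. c i) \<bullet> (G *v (\<chi> i. c i)) \<le> (norm f)\<^sup>2"
  proof -
    have "orthogonal p (f - p)"
      using p by (simp add: orthogonal_commute)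
    then have "(norm f)\<^sup>2 = (norm p)\<^sup>2 + (norm (f - p))\<^sup>2"
      using norm_add_Pythagorean[of p "f - p"] by simp
    moreover have "(norm p)\<^sup>2 = (\<chi> i. c i) \<bullet> (G *v (\<chi> i. c i))"
      unfolding power2_norm_eq_inner by (subst (1 2) p_eq) (rule inner_sum_scaleR_eq_gram[OF gram])
    ultimately show ?thesis
      by simp
  qed
  ultimately show thesis
    using that by blast
qed

lemma rkhs_subgaussian_on_cong:
  assumes "\<And>\<omega>. \<omega> \<in> space M \<Longrightarrow> \<phi> \<omega> = \<psi> \<omega>"
  shows "rkhs_subgaussian_on M E \<nu> \<phi> \<longleftrightarrow> rkhs_subgaussian_on M E \<nu> \<psi>"
proof -
  have "(\<integral>\<^sup>+ \<omega>. ennreal (exp (f \<bullet> \<phi> \<omega>) * indicator E \<omega>) \<partial>M)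
      = (\<integral>\<^sup>+ \<omega>. ennreal (exp (f \<bullet> \<psi> \<omega>) * indicator E \<omega>) \<partial>M)" for f
    by (intro nn_integral_cong) (simp add: assms)
  then show ?thesis
    by (simp add: rkhs_subgaussian_on_def)
qed

lemma rkhs_subgaussian_on_gram_combination:
  fixes v :: "'n::finite \<Rightarrow> 'h::real_inner"
  assumes w: "vec_subgaussian_on M E G \<nu> w" and gram: "\<And>i j. G $ i $ j = v i \<bullet> v j"
  shows "rkhs_subgaussian_on M E \<nu> (\<lambda>\<omega>. \<Sum>j\<in>UNIV. w \<omega> $ j *\<^sub>R v j)"
  unfolding rkhs_subgaussian_on_def
proof (intro conjI allI)
  show "\<nu> > 0"
    using w by (simp add: vec_subgaussian_on_def)
  fix f :: 'h
  obtain u where u: "\<And>w. f \<bullet> (\<Sum>j\<in>UNIV. w $ j *\<^sub>R v j) = u \<bullet> (G *v w)"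
    and u_norm: "u \<bullet> (G *v u) \<le> (norm f)\<^sup>2"
    using gram_representer_exists[OF gram, where f = f] by blast
  have "(\<integral>\<^sup>+ \<omega>. ennreal (exp (f \<bullet> (\<Sum>j\<in>UNIV. w \<omega> $ j *\<^sub>R v j)) * indicator E \<omega>) \<partial>M)
      = (\<integral>\<^sup>+ \<omega>. ennreal (exp (u \<bullet> (G *v w \<omega>)) * indicator E \<omega>) \<partial>M)"
    by (simp add: u)
  also have "\<dots> \<le> ennreal (exp (\<nu>\<^sup>2 / 2 * (u \<bullet> (G *v u))))"
    using w by (simp add: vec_subgaussian_on_def)
  also have "\<dots> \<le> ennreal (exp (\<nu>\<^sup>2 / 2 * (norm f)\<^sup>2))"
    using u_norm by (intro ennreal_leI) (simp add: mult_left_mono)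
  finally show "(\<integral>\<^sup>+ \<omega>. ennreal (exp (f \<bullet> (\<Sum>j\<in>UNIV. w \<omega> $ j *\<^sub>R v j)) * indicator E \<omega>) \<partial>M)
      \<le> ennreal (exp (\<nu>\<^sup>2 / 2 * (norm f)\<^sup>2))" .
qed

lemma sum_subset_range_eq_sum_indicator:
  fixes x :: "'n::finite \<Rightarrow> 'x" and g :: "'x \<Rightarrow> 'a::real_vector"
  assumes "inj x" "A \<subseteq> range x"
  shows "sum g A = (\<Sum>j\<in>UNIV. indicator A (x j) *\<^sub>R g (x j))"
proof -
  have "sum g A = sum g (x ` (x -` A))"
    using assms(2) by (simp add: image_vimage_eq Int_absorb2)
  also have "\<dots> = (\<Sum>j\<in>x -` A. g (x j))"
    using assms(1) by (subst sum.reindex) (auto simp: inj_on_def)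
  finally show ?thesis
    by (simp add: vimage_def sum_indicator_scaleR)
qed

theorem lemmaA2:
  fixes M :: "'a measure" and E :: "'a set"
    and x :: "'n::finite \<Rightarrow> 'x"
    and Xin :: "'x set" and Xout :: "'a \<Rightarrow> 'x set" and nout :: nat
    and k :: "'x \<Rightarrow> 'x \<Rightarrow> real" and kf :: "'x \<Rightarrow> 'h::{real_inner,complete_space}"
    and K :: "real^'n^'n" and \<nu> :: real
  assumes "prob_space M" and "E \<in> sets M"
    and "inj x"
    and "Xin \<subseteq> range x"
    and "\<forall>\<omega>\<in>space M. Xout \<omega> \<subseteq> Xin \<and> card (Xout \<omega>) = nout"
    and "rkhs_of k kf"
    and "\<forall>i j. K $ i $ j = k (x i) (x j)"
    and "vec_subgaussian_on M E K \<nu>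
           (\<lambda>\<omega>. \<chi> i. indicator Xin (x i) / real (card Xin)
                     - indicator (Xout \<omega>) (x i) / real nout)"
  shows "rkhs_subgaussian_on M E \<nu>
           (\<lambda>\<omega>. (1 / real (card Xin)) *\<^sub>R (\<Sum>y\<in>Xin. kf y)
                 - (1 / real nout) *\<^sub>R (\<Sum>y\<in>Xout \<omega>. kf y))"
proof -
  define w where "w = (\<lambda>\<omega>. \<chi> i. indicator Xin (x i) / real (card Xin)
                     - indicator (Xout \<omega>) (x i) / real nout :: real^'n)"
  have gram: "K $ i $ j = kf (x i) \<bullet> kf (x j)" for i j
    using assms(6,7) by (simp add: rkhs_of_def)
  have "(1 / real (card Xin)) *\<^sub>R (\<Sum>y\<in>Xin. kf y) - (1 / real nout) *\<^sub>R (\<Sum>y\<in>Xout \<omega>. kf y)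
      = (\<Sum>j\<in>UNIV. w \<omega> $ j *\<^sub>R kf (x j))" if "\<omega> \<in> space M" for \<omega>
  proof -
    have "Xout \<omega> \<subseteq> range x"
      using assms(4,5) that by blast
    then show ?thesis
      by (simp add: sum_subset_range_eq_sum_indicator[OF assms(3)] assms(4) w_def
          scaleR_sum_right scaleR_diff_left sum_subtractf del: sum_indicator_scaleR)
  qed
  then have "?thesis \<longleftrightarrow> rkhs_subgaussian_on M E \<nu> (\<lambda>\<omega>. \<Sum>j\<in>UNIV. w \<omega> $ j *\<^sub>R kf (x j))"
    by (rule rkhs_subgaussian_on_cong)
  also have "\<dots>"
    using rkhs_subgaussian_on_gram_combination[OF assms(8)[folded w_def] gram] .
  finally show ?thesis .
qed

end
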